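(* Let $I_1\subset\mathbb{R}$ be an open interval and $I_2$ an open, relatively compact subinterval of $I_1$. For every integer $n\ge1$ and all $C_1,C_2>0$ there exists $\delta>0$ such that for every $C^1$ map $h:I_1\to\mathbb{R}$ with $\|h-\mathrm{id}\|_{1,I_1}<\delta$ and all $x,y\in I_2$ with $|y-x|<C_2|h^n(x)-x|$, we have $$|(h(y)-y)-(h(x)-x)|<C_1|h(x)-x|.$$
   Context: For an open set $J\subset\mathbb{R}$ and a $C^1$ map $u$ on $J$, $\|u\|_{1,J}=\sup_{x\in J}(|u(x)|+|u'(x)|)$. *)

theory Defs
  imports "HOL-Analysis.Analysis"
begin

definition C1_on :: "real set \<Rightarrow> (real \<Rightarrow> real) \<Rightarrow> bool" where
  "C1_on J u \<longleftrightarrow> (\<forall>x\<in>J. u differentiable (at x)) \<and> continuous_on J (deriv u)"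

definition C1_norm :: "real set \<Rightarrow> (real \<Rightarrow> real) \<Rightarrow> real" where
  "C1_norm J u = (SUP x\<in>J. \<bar>u x\<bar> + \<bar>deriv u x\<bar>)"

end

theory Submission
  imports Defs
begin

text \<open>
  Write g(t) = h(t) - t for the displacement of h.  If the C^1 norm of g on I1 is at most
  d < 1, then by the mean value theorem g is d-Lipschitz on the interval I1 and |g| <= d.
  Hence, starting from x, each application of h moves at most twice the current distance
  from x plus |g(x)|, so as long as the orbit stays in I1 we get
  |h^k(x) - x| <= (2^k - 1) |g(x)|; the orbit does stay in I1 if |g(x)| 2^n is smaller than
  the distance from closure I2 to the complement of I1.  Combining,
  |g(y) - g(x)| <= d |y - x| < d C2 2^n |g(x)|, which is below C1 |g(x)| once d is small.
\<close>

lemma C1_norm_pointwise: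
  fixes u :: "real \<Rightarrow> real"
  assumes "bdd_above ((\<lambda>x. \<bar>u x\<bar> + \<bar>deriv u x\<bar>) ` J)" and "z \<in> J"
  shows "\<bar>u z\<bar> + \<bar>deriv u z\<bar> \<le> C1_norm J u"
  unfolding C1_norm_def using assms by (intro cSUP_upper)

lemma displacement_lipschitz:
  fixes h :: "real \<Rightarrow> real"
  assumes h: "C1_on I h" and I: "is_interval I"
    and bdd: "bdd_above ((\<lambda>x. \<bar>h x - x\<bar> + \<bar>deriv (\<lambda>t. h t - t) x\<bar>) ` I)"
    and y: "y \<in> I" and x: "x \<in> I"
  shows "\<bar>(h y - y) - (h x - x)\<bar> \<le> C1_norm I (\<lambda>t. h t - t) * \<bar>y - x\<bar>"
proof -
  define g where "g = (\<lambda>t. h t - t)"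
  have "(g has_field_derivative deriv g z) (at z within I)" if "z \<in> I" for z
  proof -
    have "g differentiable (at z)"
      using h that unfolding C1_on_def g_def by simp
    then show ?thesis
      by (simp add: DERIV_deriv_iff_real_differentiable has_field_derivative_at_within)
  qed
  moreover have "norm (deriv g z) \<le> C1_norm I g" if "z \<in> I" for z
    using C1_norm_pointwise[of g I z] bdd that unfolding g_def by simp
  ultimately have "norm (g y - g x) \<le> C1_norm I g * norm (y - x)"
    using I x y by (intro field_differentiable_bound) (auto simp: is_interval_convex_1)
  then show ?thesis unfolding g_def by simp
qed

lemma orbit_displacement_bound:
  fixes h :: "real \<Rightarrow> real"
  assumes lip: "\<And>z. z \<in> I \<Longrightarrow> \<bar>(h z - z) - (h x - x)\<bar> \<le> \<bar>z - x\<bar>"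
    and ball: "ball x e \<subseteq> I"
    and small: "\<bar>h x - x\<bar> * (2 ^ n - 1) < e"
    and "k \<le> n"
  shows "(h ^^ k) x \<in> I \<and> \<bar>(h ^^ k) x - x\<bar> \<le> \<bar>h x - x\<bar> * (2 ^ k - 1)"
  using \<open>k \<le> n\<close>
proof (induction k)
  case 0
  have "0 \<le> \<bar>h x - x\<bar> * (2 ^ n - 1)" by simp
  with small have "e > 0" by linarith
  then show ?case using ball by auto
next
  case (Suc k)
  let ?z = "(h ^^ k) x" and ?c = "\<bar>h x - x\<bar>"
  from Suc have z: "?z \<in> I" "\<bar>?z - x\<bar> \<le> ?c * (2 ^ k - 1)" by auto
  have "\<bar>(h ^^ Suc k) x - x\<bar> = \<bar>(?z - x) + ((h ?z - ?z) - (h x - x)) + (h x - x)\<bar>" by simp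
  also have "\<dots> \<le> \<bar>?z - x\<bar> + \<bar>(h ?z - ?z) - (h x - x)\<bar> + ?c"
    by (intro order_trans[OF abs_triangle_ineq] add_right_mono abs_triangle_ineq)
  also have "\<dots> \<le> 2 * \<bar>?z - x\<bar> + ?c"
    unfolding mult_2 by (intro add_right_mono add_left_mono lip z(1))
  also have "\<dots> \<le> ?c * (2 ^ Suc k - 1)" using z(2) by (simp add: algebra_simps)
  finally have bound: "\<bar>(h ^^ Suc k) x - x\<bar> \<le> ?c * (2 ^ Suc k - 1)" .
  have "?c * (2 ^ Suc k - 1) \<le> ?c * (2 ^ n - 1)"
  proof -
    have "(2::real) ^ Suc k \<le> 2 ^ n" using Suc.prems by (intro power_increasing) auto
    then show ?thesis by (intro mult_left_mono) auto
  qed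
  with bound small have "(h ^^ Suc k) x \<in> ball x e" by (simp add: dist_real_def)
  with ball bound show ?case by blast
qed

lemma displacement_comparison:
  fixes h :: "real \<Rightarrow> real"
  assumes lip: "\<And>z w. z \<in> I \<Longrightarrow> w \<in> I \<Longrightarrow> \<bar>(h w - w) - (h z - z)\<bar> \<le> L * \<bar>w - z\<bar>"
    and gx: "\<bar>h x - x\<bar> \<le> L" and L: "0 < L" "L \<le> 1"
    and ball: "ball x e \<subseteq> I" and Le: "L * 2 ^ n \<le> e" and LC: "L * C2 * 2 ^ n \<le> C1"
    and C2: "C2 > 0" and y: "y \<in> I"
    and close: "\<bar>y - x\<bar> < C2 * \<bar>(h ^^ n) x - x\<bar>"
  shows "\<bar>(h y - y) - (h x - x)\<bar> < C1 * \<bar>h x - x\<bar>"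
proof -
  let ?c = "\<bar>h x - x\<bar>"
  have "0 < L * 2 ^ n" using L by simp
  then have x: "x \<in> I" using ball Le by auto
  have lip1: "\<bar>(h z - z) - (h x - x)\<bar> \<le> \<bar>z - x\<bar>" if "z \<in> I" for z
  proof -
    have "\<bar>(h z - z) - (h x - x)\<bar> \<le> L * \<bar>z - x\<bar>" using lip[OF x that] .
    also have "\<dots> \<le> \<bar>z - x\<bar>" using L by (intro mult_left_le_one_le) auto
    finally show ?thesis .
  qed
  have "?c * (2 ^ n - 1) \<le> L * (2 ^ n - 1)" using gx by (intro mult_right_mono) auto
  also have "\<dots> < L * 2 ^ n" using L by simp
  finally have "?c * (2 ^ n - 1) < e" using Le by linarith
  then have "\<bar>(h ^^ n) x - x\<bar> \<le> ?c * (2 ^ n - 1)"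
    using orbit_displacement_bound[OF lip1 ball] by blast
  also have "\<dots> \<le> ?c * 2 ^ n" by (intro mult_left_mono) auto
  finally have "C2 * \<bar>(h ^^ n) x - x\<bar> \<le> C2 * (?c * 2 ^ n)" using C2 by simp
  with close have close': "\<bar>y - x\<bar> < C2 * (?c * 2 ^ n)" by linarith
  have "\<bar>(h y - y) - (h x - x)\<bar> \<le> L * \<bar>y - x\<bar>" using lip[OF x y] .
  also have "\<dots> < L * (C2 * (?c * 2 ^ n))" using close' L by simp
  also have "\<dots> = (L * C2 * 2 ^ n) * ?c" by (simp add: algebra_simps)
  also have "\<dots> \<le> C1 * ?c" using LC by (simp add: mult_right_mono)
  finally show ?thesis .
qed

theorem lemma3p11:
  fixes I1 I2 :: "real set" and n :: nat and C1 C2 :: real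
  assumes "open I1" and "is_interval I1"
    and "open I2" and "is_interval I2" and "I2 \<subseteq> I1"
    and "compact (closure I2)" and "closure I2 \<subseteq> I1"
    and "n \<ge> 1" and "C1 > 0" and "C2 > 0"
  shows "\<exists>\<delta>>0. \<forall>h :: real \<Rightarrow> real.
           C1_on I1 h
           \<and> bdd_above ((\<lambda>x. \<bar>h x - x\<bar> + \<bar>deriv (\<lambda>t. h t - t) x\<bar>) ` I1)
           \<and> C1_norm I1 (\<lambda>t. h t - t) < \<delta>
           \<longrightarrow> (\<forall>x\<in>I2. \<forall>y\<in>I2. \<bar>y - x\<bar> < C2 * \<bar>(h ^^ n) x - x\<bar>
                 \<longrightarrow> \<bar>(h y - y) - (h x - x)\<bar> < C1 * \<bar>h x - x\<bar>)"
proof -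
  obtain e where e: "e > 0" "\<And>x. x \<in> closure I2 \<Longrightarrow> ball x e \<subseteq> I1"
    using Heine_Borel_lemma[OF assms(6), of "{I1}"] assms(1,7) by auto
  define \<delta> :: real where "\<delta> = min 1 (min (e / 2 ^ n) (C1 / (C2 * 2 ^ n)))"
  have "\<delta> \<le> e / 2 ^ n" "\<delta> \<le> C1 / (C2 * 2 ^ n)" unfolding \<delta>_def by auto
  then have \<delta>: "0 < \<delta>" "\<delta> \<le> 1" "\<delta> * 2 ^ n \<le> e" "\<delta> * C2 * 2 ^ n \<le> C1"
    using e assms(9,10) by (auto simp: \<delta>_def pos_le_divide_eq mult.assoc)
  show ?thesis
  proof (intro exI[of _ \<delta>] conjI allI impI ballI \<delta>(1))
    fix h :: "real \<Rightarrow> real" and x y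
    assume h: "C1_on I1 h \<and> bdd_above ((\<lambda>x. \<bar>h x - x\<bar> + \<bar>deriv (\<lambda>t. h t - t) x\<bar>) ` I1)
           \<and> C1_norm I1 (\<lambda>t. h t - t) < \<delta>"
      and x: "x \<in> I2" and y: "y \<in> I2" and close: "\<bar>y - x\<bar> < C2 * \<bar>(h ^^ n) x - x\<bar>"
    have lip: "\<bar>(h w - w) - (h z - z)\<bar> \<le> \<delta> * \<bar>w - z\<bar>" if "z \<in> I1" "w \<in> I1" for z w
    proof -
      have "\<bar>(h w - w) - (h z - z)\<bar> \<le> C1_norm I1 (\<lambda>t. h t - t) * \<bar>w - z\<bar>"
        using h assms(2) that by (intro displacement_lipschitz) auto
      also have "\<dots> \<le> \<delta> * \<bar>w - z\<bar>" using h by (intro mult_right_mono) auto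
      finally show ?thesis .
    qed
    have xI: "x \<in> I1" "y \<in> I1" using x y assms(5) by auto
    have gx: "\<bar>h x - x\<bar> \<le> \<delta>"
      using C1_norm_pointwise[of "\<lambda>t. h t - t" I1 x] h xI(1) by auto
    have ball: "ball x e \<subseteq> I1" using e(2) x closure_subset by blast
    show "\<bar>(h y - y) - (h x - x)\<bar> < C1 * \<bar>h x - x\<bar>"
      by (rule displacement_comparison[where I = I1 and L = \<delta> and e = e])
        (fact lip gx \<delta> ball assms(10) xI(2) close)+
  qed
qed

end
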